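(* For every $n\geq 6$ there exist two distinct binary level-1 networks $N_1,N_2$ on the same leaf set of size $n$ which have the same number of galls and the same number of non-trivial cut arcs, but $|\mathcal R(N_1)|\neq|\mathcal R(N_2)|$.
   Context: A leaf of a DAG is a vertex of in-degree 1 and out-degree 0. For a finite set $X$, a phylogenetic network on $X$ is a DAG (no loops, no multiple arcs) with a unique vertex (the root) of in-degree 0, which has out-degree at least 2, whose set of leaves is $X$, and in which every other non-leaf vertex is either a split vertex (in-degree 1, out-degree $\geq 2$) or a hybrid vertex (in-degree $\geq 2$, out-degree $\geq 1$). It is binary if the root and all split vertices have out-degree 2 and every hybrid vertex has in-degree 2 and out-degree 1. $U(N)$ denotes the underlying undirected graph. A binary level-1 network is a binary phylogenetic network in which every biconnected component of $U(N)$ contains at most one hybrid vertex; by standing convention every cycle of $U(N)$ has at least four vertices. A gall is a biconnected component of $U(N)$ with more than one edge. An arc is a cut arc if deleting it disconnects $U(N)$; it is non-trivial if its head is not a leaf. For distinct $a,b,c\in X$, the triplet $ab|c$ is consistent with $N$ if there exist distinct vertices $v,w$ of $N$ and directed paths from $v$ to $c$, from $v$ to $w$, from $w$ to $a$ and from $w$ to $b$ such that no two of these four paths share an interior vertex. $\mathcal R(N)$ is the set of all triplets consistent with $N$ (with $ab|c=ba|c$). *)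

theory Defs
  imports Main
begin

text \<open>A network is given by a vertex set V and an arc set A (pairs (tail, head)).
  Multiple arcs are impossible by construction.\<close>

definition indeg :: "('v \<times> 'v) set \<Rightarrow> 'v \<Rightarrow> nat" where
  "indeg A v = card {u. (u, v) \<in> A}"

definition outdeg :: "('v \<times> 'v) set \<Rightarrow> 'v \<Rightarrow> nat" where
  "outdeg A v = card {w. (v, w) \<in> A}"

definition is_dag :: "'v set \<Rightarrow> ('v \<times> 'v) set \<Rightarrow> bool" where
  "is_dag V A \<longleftrightarrow> finite V \<and> A \<subseteq> V \<times> V \<and> (\<forall>v. (v, v) \<notin> A\<^sup>+)"

definition leaves :: "'v set \<Rightarrow> ('v \<times> 'v) set \<Rightarrow> 'v set" where
  "leaves V A = {v \<in> V. indeg A v = 1 \<and> outdeg A v = 0}"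

definition hybrid :: "('v \<times> 'v) set \<Rightarrow> 'v \<Rightarrow> bool" where
  "hybrid A v \<longleftrightarrow> indeg A v \<ge> 2 \<and> outdeg A v \<ge> 1"

definition binary_network :: "'v set \<Rightarrow> ('v \<times> 'v) set \<Rightarrow> 'v set \<Rightarrow> bool" where
  "binary_network V A X \<longleftrightarrow>
     is_dag V A \<and>
     (\<exists>!r. r \<in> V \<and> indeg A r = 0) \<and>
     (\<forall>v\<in>V. (indeg A v = 0 \<and> outdeg A v = 2) \<or>
             (indeg A v = 1 \<and> outdeg A v = 0) \<or>
             (indeg A v = 1 \<and> outdeg A v = 2) \<or>
             (indeg A v = 2 \<and> outdeg A v = 1)) \<and>
     leaves V A = X"

definition adj :: "('v \<times> 'v) set \<Rightarrow> 'v \<Rightarrow> 'v \<Rightarrow> bool" where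
  "adj A x y \<longleftrightarrow> (x, y) \<in> A \<or> (y, x) \<in> A"

definition uedges :: "('v \<times> 'v) set \<Rightarrow> 'v set \<Rightarrow> ('v \<times> 'v) set" where
  "uedges A S = {(x, y). x \<in> S \<and> y \<in> S \<and> adj A x y}"

definition uconnected :: "('v \<times> 'v) set \<Rightarrow> 'v set \<Rightarrow> bool" where
  "uconnected A S \<longleftrightarrow> (\<forall>x\<in>S. \<forall>y\<in>S. (x, y) \<in> (uedges A S)\<^sup>*)"

definition biconnected :: "('v \<times> 'v) set \<Rightarrow> 'v set \<Rightarrow> bool" where
  "biconnected A S \<longleftrightarrow> S \<noteq> {} \<and> uconnected A S \<and> (\<forall>v\<in>S. uconnected A (S - {v}))"

definition bicomp :: "'v set \<Rightarrow> ('v \<times> 'v) set \<Rightarrow> 'v set \<Rightarrow> bool" where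
  "bicomp V A S \<longleftrightarrow> S \<subseteq> V \<and> biconnected A S \<and>
     (\<forall>T. S \<subset> T \<and> T \<subseteq> V \<longrightarrow> \<not> biconnected A T)"

definition edges_in :: "('v \<times> 'v) set \<Rightarrow> 'v set \<Rightarrow> ('v \<times> 'v) set" where
  "edges_in A S = {e \<in> A. fst e \<in> S \<and> snd e \<in> S}"

definition binary_level1 :: "'v set \<Rightarrow> ('v \<times> 'v) set \<Rightarrow> 'v set \<Rightarrow> bool" where
  "binary_level1 V A X \<longleftrightarrow>
     binary_network V A X \<and>
     (\<forall>S. bicomp V A S \<longrightarrow> card {v \<in> S. hybrid A v} \<le> 1) \<and>
     \<comment> \<open>standing convention: every cycle of U(N) has at least four vertices (no triangles)\<close>
     \<not> (\<exists>a b c. a \<noteq> b \<and> b \<noteq> c \<and> a \<noteq> c \<and> adj A a b \<and> adj A b c \<and> adj A a c)"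

definition galls :: "'v set \<Rightarrow> ('v \<times> 'v) set \<Rightarrow> 'v set set" where
  "galls V A = {S. bicomp V A S \<and> card (edges_in A S) > 1}"

definition cut_arc :: "'v set \<Rightarrow> ('v \<times> 'v) set \<Rightarrow> 'v \<times> 'v \<Rightarrow> bool" where
  "cut_arc V A e \<longleftrightarrow> e \<in> A \<and> \<not> uconnected (A - {e}) V"

definition nontrivial_cut_arcs :: "'v set \<Rightarrow> ('v \<times> 'v) set \<Rightarrow> ('v \<times> 'v) set" where
  "nontrivial_cut_arcs V A = {e. cut_arc V A e \<and> snd e \<notin> leaves V A}"

definition dpath :: "('v \<times> 'v) set \<Rightarrow> 'v list \<Rightarrow> 'v \<Rightarrow> 'v \<Rightarrow> bool" where
  "dpath A p x y \<longleftrightarrow> p \<noteq> [] \<and> hd p = x \<and> last p = y \<and>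
     (\<forall>i. Suc i < length p \<longrightarrow> (p ! i, p ! Suc i) \<in> A)"

definition interior :: "'v list \<Rightarrow> 'v set" where
  "interior p = set (butlast (tl p))"

definition triplet_consistent :: "'v set \<Rightarrow> ('v \<times> 'v) set \<Rightarrow> 'v \<Rightarrow> 'v \<Rightarrow> 'v \<Rightarrow> bool" where
  "triplet_consistent V A a b c \<longleftrightarrow>
     (\<exists>v w p1 p2 p3 p4. v \<in> V \<and> w \<in> V \<and> v \<noteq> w \<and>
        dpath A p1 v c \<and> dpath A p2 v w \<and> dpath A p3 w a \<and> dpath A p4 w b \<and>
        (\<forall>p\<in>{p1, p2, p3, p4}. \<forall>q\<in>{p1, p2, p3, p4}. p \<noteq> q \<longrightarrow> interior p \<inter> interior q = {}))"

text \<open>R(N): triplet ab|c represented as ({a,b}, c), so ab|c = ba|c.\<close>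
definition triplets :: "'v set \<Rightarrow> ('v \<times> 'v) set \<Rightarrow> ('v set \<times> 'v) set" where
  "triplets V A = {({a, b}, c) | a b c. a \<in> leaves V A \<and> b \<in> leaves V A \<and> c \<in> leaves V A \<and>
      a \<noteq> b \<and> a \<noteq> c \<and> b \<noteq> c \<and> triplet_consistent V A a b c}"

end

theory Submission
  imports Defs
begin

text \<open>Two explicit networks on the vertices 0..10 with leaves 5, 6, 7, 9, 10 share the underlying
  undirected graph: the second arises from the first by reversing the directed path 4, 3, 2, 1 of
  its gall, which moves the hybrid vertex from 1 to 4. Reversing arcs does not change blocks, galls
  or cut arcs, but a computation shows that the two networks display 15 and 16 triplets.

  Both networks can be grown leaf by leaf: a new root r' gets the old root r and a new leaf z as
  children. The triplets of the grown network are the old ones together with all ab|z. A triplet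
  witness whose top vertex is r' would have to route three internally disjoint paths to distinct
  leaves through r, which has only two children. Since both networks gain the same new triplets and
  the arc reversal persists, growing both n - 5 times proves the theorem.\<close>

section \<open>Directed paths\<close>

lemma dpath_Cons:
  "dpath A (x # q) x' y \<longleftrightarrow> x' = x \<and> (if q = [] then y = x else (x, hd q) \<in> A \<and> dpath A q (hd q) y)"
proof (cases q)
  case Nil
  then show ?thesis by (auto simp: dpath_def)
next
  case (Cons u q')
  have "(\<forall>i. Suc i < length (x # q) \<longrightarrow> ((x # q) ! i, (x # q) ! Suc i) \<in> A) \<longleftrightarrow>
        (x, u) \<in> A \<and> (\<forall>i. Suc i < length q \<longrightarrow> (q ! i, q ! Suc i) \<in> A)"
    using Cons by (auto simp: less_Suc_eq_0_disj nth_Cons split: nat.splits)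
  then show ?thesis using Cons by (auto simp: dpath_def)
qed

lemma dpath_single [simp]: "dpath A [x] x' y \<longleftrightarrow> x' = x \<and> y = x"
  by (auto simp: dpath_def)

lemma dpath_mono: "A \<subseteq> B \<Longrightarrow> dpath A p x y \<Longrightarrow> dpath B p x y"
  by (auto simp: dpath_def)

lemma dpath_hd_in: "dpath A p x y \<Longrightarrow> x \<in> set p"
  by (auto simp: dpath_def)

lemma dpath_last_in: "dpath A p x y \<Longrightarrow> y \<in> set p"
  by (auto simp: dpath_def)

lemma dpath_last: "dpath A p x y \<Longrightarrow> last p = y"
  by (simp add: dpath_def)

lemma dpath_nth_trancl:
  assumes "dpath A p x y" "j < length p" "i < j"
  shows "(p ! i, p ! j) \<in> A\<^sup>+"
  using assms(2,3)
proof (induction j)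
  case (Suc j)
  have "(p ! j, p ! Suc j) \<in> A" using assms(1) Suc.prems by (auto simp: dpath_def)
  then show ?case using Suc by (cases "i = j") auto
qed simp

lemma dpath_arc_into:
  assumes "dpath A p x y" "t \<in> set p" "t \<noteq> x"
  shows "\<exists>u\<in>set p. (u, t) \<in> A"
proof -
  obtain i where i: "i < length p" "p ! i = t" using assms(2) by (auto simp: in_set_conv_nth)
  have "i \<noteq> 0" using assms(1,3) i by (metis dpath_def hd_conv_nth)
  then obtain j where "i = Suc j" by (cases i) auto
  then show ?thesis using assms(1) i by (auto simp: dpath_def)
qed

lemma dpath_arc_out_of:
  assumes "dpath A p x y" "t \<in> set p" "t \<noteq> y"
  shows "\<exists>u\<in>set p. (t, u) \<in> A"
proof -
  obtain i where i: "i < length p" "p ! i = t" using assms(2) by (auto simp: in_set_conv_nth)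
  have "i \<noteq> length p - 1" using assms(1,3) i by (metis dpath_def last_conv_nth)
  then have "Suc i < length p" using i(1) by linarith
  then show ?thesis using assms(1) i by (auto simp: dpath_def)
qed

lemma dpath_distinct:
  assumes "dpath A p x y" "\<forall>v. (v, v) \<notin> A\<^sup>+"
  shows "distinct p"
  unfolding distinct_conv_nth
proof (intro allI impI)
  fix i j assume ij: "i < length p" "j < length p" "i \<noteq> j"
  then consider "i < j" | "j < i" by linarith
  then show "p ! i \<noteq> p ! j"
    using dpath_nth_trancl[OF assms(1)] ij assms(2) by cases force+
qed

lemma dpath_set_subset:
  assumes "dpath A p x y" "A \<subseteq> V \<times> V" "x \<in> V"
  shows "set p \<subseteq> V"
proof
  fix t assume "t \<in> set p"
  then show "t \<in> V" using dpath_arc_into[OF assms(1)] assms(2,3) by (cases "t = x") auto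
qed

lemma dpath_length:
  assumes "dpath A p x y" "A \<subseteq> V \<times> V" "x \<in> V" "finite V" "\<forall>v. (v, v) \<notin> A\<^sup>+"
  shows "length p \<le> card V"
proof -
  have "length p = card (set p)" using dpath_distinct[OF assms(1,5)] by (simp add: distinct_card)
  also have "\<dots> \<le> card V" using dpath_set_subset[OF assms(1-3)] assms(4) by (rule card_mono[rotated])
  finally show ?thesis .
qed

lemma interior_Cons [simp]: "interior (x # q) = set (butlast q)"
  by (simp add: interior_def)

lemma interior_subset_interior_Cons: "interior q \<subseteq> interior (x # q)"
  by (cases q) (auto simp: interior_def)

lemma interior_arc_out:
  assumes "dpath A p x y" "u \<in> interior p"
  shows "\<exists>w. (u, w) \<in> A"
proof -
  have "u \<in> set (butlast (tl p))" using assms(2) by (simp add: interior_def)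
  then obtain j where "j < length (butlast (tl p))" "butlast (tl p) ! j = u"
    unfolding in_set_conv_nth by blast
  then have "Suc (Suc j) < length p" "p ! Suc j = u" by (auto simp: nth_butlast nth_tl)
  then show ?thesis using assms(1) by (auto simp: dpath_def)
qed

lemma interior_arc_into:
  assumes "dpath A p x y" "u \<in> interior p"
  shows "\<exists>w. (w, u) \<in> A"
proof -
  have "u \<in> set (butlast (tl p))" using assms(2) by (simp add: interior_def)
  then obtain j where "j < length (butlast (tl p))" "butlast (tl p) ! j = u"
    unfolding in_set_conv_nth by blast
  then have "Suc j < length p" "p ! Suc j = u" by (auto simp: nth_butlast nth_tl)
  then show ?thesis using assms(1) by (auto simp: dpath_def)
qed

lemma dpath_second_vertex:
  assumes "dpath A p x y" "y \<noteq> x"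
  shows "(x, p ! 1) \<in> A \<and> (p ! 1 = y \<or> p ! 1 \<in> interior p)"
proof -
  obtain u q where p: "p = x # u # q"
    using assms by (cases p; cases "tl p") (auto simp: dpath_def)
  have "(x, u) \<in> A" using assms(1) p by (auto simp: dpath_Cons)
  moreover have "u = y \<or> u \<in> set (butlast (u # q))"
    using assms(1) p by (cases q) (auto simp: dpath_def)
  ultimately show ?thesis using p by simp
qed

lemma paths_with_common_second_vertex:
  assumes "dpath A p x y" "dpath A q x y'" "y \<noteq> x" "y' \<noteq> x" "y \<noteq> y'"
    "\<forall>w. (y, w) \<notin> A" "\<forall>w. (y', w) \<notin> A" "p ! 1 = q ! 1" "interior p \<inter> interior q = {}"
  shows False
proof -
  have "y \<notin> interior q" "y' \<notin> interior p"
    using interior_arc_out[OF assms(2)] interior_arc_out[OF assms(1)] assms(6,7) by blast+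
  then show False
    using dpath_second_vertex[OF assms(1,3)] dpath_second_vertex[OF assms(2,4)] assms(5,8,9) by auto
qed

lemma outdeg_two_no_three_disjoint_paths:
  assumes "finite {w. (x, w) \<in> A}" "card {w. (x, w) \<in> A} \<le> 2"
    and paths: "dpath A p1 x y1" "dpath A p2 x y2" "dpath A p3 x y3"
    and "x \<notin> {y1, y2, y3}" "distinct [y1, y2, y3]" "\<forall>y\<in>{y1, y2, y3}. \<forall>w. (y, w) \<notin> A"
    and "interior p1 \<inter> interior p2 = {}" "interior p1 \<inter> interior p3 = {}" "interior p2 \<inter> interior p3 = {}"
  shows False
proof -
  have ends: "y1 \<noteq> x" "y2 \<noteq> x" "y3 \<noteq> x" "y1 \<noteq> y2" "y1 \<noteq> y3" "y2 \<noteq> y3"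
    and sinks: "\<forall>w. (y1, w) \<notin> A" "\<forall>w. (y2, w) \<notin> A" "\<forall>w. (y3, w) \<notin> A"
    using assms(6-8) by auto
  have "p1 ! 1 \<noteq> p2 ! 1"
    by (rule notI, rule paths_with_common_second_vertex[OF paths(1,2) ends(1,2,4) sinks(1,2) _ assms(9)])
  moreover have "p1 ! 1 \<noteq> p3 ! 1"
    by (rule notI, rule paths_with_common_second_vertex[OF paths(1,3) ends(1,3,5) sinks(1,3) _ assms(10)])
  moreover have "p2 ! 1 \<noteq> p3 ! 1"
    by (rule notI, rule paths_with_common_second_vertex[OF paths(2,3) ends(2,3,6) sinks(2,3) _ assms(11)])
  ultimately have "card {p1 ! 1, p2 ! 1, p3 ! 1} = 3" by simp
  moreover have "{p1 ! 1, p2 ! 1, p3 ! 1} \<subseteq> {w. (x, w) \<in> A}"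
    using dpath_second_vertex[OF paths(1) ends(1)] dpath_second_vertex[OF paths(2) ends(2)]
      dpath_second_vertex[OF paths(3) ends(3)] by auto
  then have "card {p1 ! 1, p2 ! 1, p3 ! 1} \<le> card {w. (x, w) \<in> A}" by (rule card_mono[OF assms(1)])
  ultimately show False using assms(2) by simp
qed

section \<open>Extendable networks and adding a root\<close>

definition triangle_free :: "('v \<times> 'v) set \<Rightarrow> bool" where
  "triangle_free A \<longleftrightarrow>
     \<not> (\<exists>a b c. a \<noteq> b \<and> b \<noteq> c \<and> a \<noteq> c \<and> adj A a b \<and> adj A b c \<and> adj A a c)"

definition splits_leaf_pairs :: "('v \<times> 'v) set \<Rightarrow> 'v \<Rightarrow> 'v set \<Rightarrow> bool" where
  "splits_leaf_pairs A r X \<longleftrightarrow> (\<forall>a\<in>X. \<forall>b\<in>X. a \<noteq> b \<longrightarrow>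
     (\<exists>w p q q'. dpath A p r w \<and> dpath A q w a \<and> dpath A q' w b \<and>
        interior p \<inter> interior q = {} \<and> interior p \<inter> interior q' = {} \<and> interior q \<inter> interior q' = {}))"

definition reaches_leaves :: "('v \<times> 'v) set \<Rightarrow> 'v \<Rightarrow> 'v set \<Rightarrow> bool" where
  "reaches_leaves A r X \<longleftrightarrow> (\<forall>a\<in>X. \<exists>p. dpath A p r a)"

text \<open>The root splitting every pair of leaves is what makes all triplets ab|z consistent once a new
  root with the leaf z is added.\<close>

definition extendable :: "'v set \<Rightarrow> ('v \<times> 'v) set \<Rightarrow> 'v set \<Rightarrow> 'v \<Rightarrow> bool" where
  "extendable V A X r \<longleftrightarrow> binary_network V A X \<and> r \<in> V \<and> (\<forall>u. (u, r) \<notin> A) \<and>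
     card {v \<in> V. hybrid A v} \<le> 1 \<and> triangle_free A \<and> splits_leaf_pairs A r X \<and> reaches_leaves A r X"

lemma extendable_binary_level1:
  assumes "extendable V A X r"
  shows "binary_level1 V A X"
proof -
  have network: "binary_network V A X" and hybrids: "card {v \<in> V. hybrid A v} \<le> 1"
    and "triangle_free A"
    using assms by (auto simp: extendable_def)
  have "card {v \<in> S. hybrid A v} \<le> 1" if "bicomp V A S" for S
  proof -
    have "card {v \<in> S. hybrid A v} \<le> card {v \<in> V. hybrid A v}"
      using that network by (intro card_mono) (auto simp: bicomp_def binary_network_def is_dag_def)
    then show ?thesis using hybrids by simp
  qed
  then show ?thesis
    using network \<open>triangle_free A\<close> unfolding binary_level1_def triangle_free_def by blast
qed

lemma triplet_consistent_mono:
  assumes "V \<subseteq> V'" "A \<subseteq> A'" "triplet_consistent V A a b c"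
  shows "triplet_consistent V' A' a b c"
  using assms dpath_mono[OF assms(2)] unfolding triplet_consistent_def by blast

definition new_triplets :: "'v set \<Rightarrow> 'v \<Rightarrow> ('v set \<times> 'v) set" where
  "new_triplets X z = {({a, b}, z) | a b. a \<in> X \<and> b \<in> X \<and> a \<noteq> b}"

locale root_extension =
  fixes V :: "'v set" and A :: "('v \<times> 'v) set" and X :: "'v set" and r r' z :: 'v
  assumes extendable: "extendable V A X r"
    and fresh: "r' \<notin> V" "z \<notin> V" "r' \<noteq> z"
begin

abbreviation "V' \<equiv> insert r' (insert z V)"
abbreviation "A' \<equiv> insert (r', r) (insert (r', z) A)"

lemma network: "binary_network V A X"
  using extendable by (simp add: extendable_def)

lemma finite_V: "finite V" and arcs_subset: "A \<subseteq> V \<times> V" and leaves_eq: "leaves V A = X"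
  using network by (simp_all add: binary_network_def is_dag_def)

lemma root_in: "r \<in> V" and no_arc_into_root: "(u, r) \<notin> A"
  using extendable by (simp_all add: extendable_def)

lemma leaves_subset: "X \<subseteq> V"
  using leaves_eq by (auto simp: leaves_def)

lemma degrees: "v \<in> V \<Longrightarrow> (indeg A v = 0 \<and> outdeg A v = 2) \<or> (indeg A v = 1 \<and> outdeg A v = 0) \<or>
    (indeg A v = 1 \<and> outdeg A v = 2) \<or> (indeg A v = 2 \<and> outdeg A v = 1)"
  using network by (simp add: binary_network_def)

lemma indeg_root: "indeg A r = 0"
  using no_arc_into_root by (simp add: indeg_def)

lemma outdeg_root: "outdeg A r = 2"
  using degrees[OF root_in] indeg_root by simp

lemma root_unique: "v \<in> V \<Longrightarrow> indeg A v = 0 \<Longrightarrow> v = r"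
  using network root_in indeg_root unfolding binary_network_def by blast

lemma finite_out_arcs: "finite {w. (v, w) \<in> A}"
  using arcs_subset finite_V by (auto intro: finite_subset)

lemma leaf_no_arc_out: "a \<in> X \<Longrightarrow> (a, w) \<notin> A"
  using leaves_eq finite_out_arcs[of a] by (auto simp: leaves_def outdeg_def)

lemma root_not_leaf: "r \<notin> X"
  using indeg_root leaves_eq by (auto simp: leaves_def)

lemma fresh_vertices: "r \<noteq> r'" "r \<noteq> z" "r' \<notin> X" "z \<notin> X"
  using root_in leaves_subset fresh by auto

lemma no_arc_into_new_root: "(u, r') \<notin> A'"
  using arcs_subset fresh fresh_vertices by auto

lemma new_leaf_arcs: "(z, w) \<notin> A'" "(u, z) \<in> A' \<Longrightarrow> u = r'"
  using arcs_subset fresh by auto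

lemma indeg_ext: "indeg A' v = (if v = r' then 0 else if v = r \<or> v = z then 1 else indeg A v)"
proof -
  have "{u. (u, v) \<in> A'} = (if v = r' then {} else if v = r \<or> v = z then {r'} else {u. (u, v) \<in> A})"
    using no_arc_into_root arcs_subset fresh fresh_vertices by auto
  then show ?thesis unfolding indeg_def by simp
qed

lemma outdeg_ext: "outdeg A' v = (if v = r' then 2 else if v = z then 0 else outdeg A v)"
proof -
  have "{w. (v, w) \<in> A'} = (if v = r' then {r, z} else if v = z then {} else {w. (v, w) \<in> A})"
    using arcs_subset fresh by auto
  then show ?thesis unfolding outdeg_def using fresh_vertices by simp
qed

lemma leaves_ext: "leaves V' A' = insert z X"
proof (rule set_eqI)
  fix v
  show "v \<in> leaves V' A' \<longleftrightarrow> v \<in> insert z X"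
  proof (cases "v \<in> {r', z, r}")
    case True
    then show ?thesis
      using fresh(3) fresh_vertices outdeg_root root_not_leaf by (auto simp: leaves_def indeg_ext outdeg_ext)
  next
    case False
    then have "v \<in> leaves V' A' \<longleftrightarrow> v \<in> leaves V A" by (auto simp: leaves_def indeg_ext outdeg_ext)
    then show ?thesis using False leaves_eq by auto
  qed
qed

lemma trancl_ext: "(x, y) \<in> A'\<^sup>+ \<Longrightarrow> y \<noteq> r' \<and> (x = r' \<or> (x, y) \<in> A\<^sup>+)"
proof (induction rule: trancl_induct)
  case (base y)
  then show ?case using no_arc_into_new_root[of x] by blast
next
  case (step y w)
  then have "(y, w) \<in> A" using no_arc_into_new_root by blast
  then show ?case using step no_arc_into_new_root[of y] by (auto intro: trancl_into_trancl)
qed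

lemma is_dag_ext: "is_dag V' A'"
proof -
  have "(v, v) \<notin> A\<^sup>+" for v using network by (simp add: binary_network_def is_dag_def)
  then have "(v, v) \<notin> A'\<^sup>+" for v using trancl_ext by blast
  then show ?thesis using finite_V arcs_subset root_in by (auto simp: is_dag_def)
qed

lemma degrees_new_vertices:
  "indeg A' r' = 0" "outdeg A' r' = 2" "indeg A' z = 1" "outdeg A' z = 0" "indeg A' r = 1" "outdeg A' r = 2"
  using outdeg_root fresh(3) fresh_vertices by (simp_all add: indeg_ext outdeg_ext)

lemma degrees_old_vertices: "v \<notin> {r', z, r} \<Longrightarrow> indeg A' v = indeg A v \<and> outdeg A' v = outdeg A v"
  by (simp add: indeg_ext outdeg_ext)

lemma unique_root_ext: "\<exists>!x. x \<in> V' \<and> indeg A' x = 0"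
proof (rule ex1I[of _ r'])
  fix x assume x: "x \<in> V' \<and> indeg A' x = 0"
  show "x = r'"
  proof (rule ccontr)
    assume "x \<noteq> r'"
    moreover have "x \<noteq> z" "x \<noteq> r" using x degrees_new_vertices(3,5) by (metis zero_neq_one)+
    ultimately have "x \<in> V" "indeg A x = 0" using x degrees_old_vertices[of x] by auto
    then show False using root_unique \<open>x \<noteq> r\<close> by blast
  qed
qed (simp add: degrees_new_vertices)

lemma degrees_ext:
  assumes "v \<in> V'"
  shows "(indeg A' v = 0 \<and> outdeg A' v = 2) \<or> (indeg A' v = 1 \<and> outdeg A' v = 0) \<or>
    (indeg A' v = 1 \<and> outdeg A' v = 2) \<or> (indeg A' v = 2 \<and> outdeg A' v = 1)"
proof -
  consider "v = r'" | "v = z" | "v = r" | "v \<in> V" "v \<notin> {r', z, r}" using assms by blast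
  then show ?thesis
    using degrees[of v] degrees_new_vertices degrees_old_vertices[of v] by cases simp_all
qed

lemma binary_network_ext: "binary_network V' A' (insert z X)"
  unfolding binary_network_def
  by (intro conjI ballI is_dag_ext unique_root_ext degrees_ext leaves_ext) assumption

lemma hybrids_ext: "{v \<in> V'. hybrid A' v} = {v \<in> V. hybrid A v}"
proof (rule set_eqI)
  fix v
  show "v \<in> {v \<in> V'. hybrid A' v} \<longleftrightarrow> v \<in> {v \<in> V. hybrid A v}"
  proof (cases "v \<in> {r', z, r}")
    case True
    then consider "v = r'" | "v = z" | "v = r" by blast
    then show ?thesis using indeg_root fresh degrees_new_vertices by cases (simp_all add: hybrid_def)
  next
    case False
    then show ?thesis using degrees_old_vertices[of v] by (auto simp: hybrid_def)
  qed
qed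

lemma triangle_free_ext: "triangle_free A'"
  unfolding triangle_free_def
proof (intro notI, elim exE conjE)
  have adj_sym: "adj B x y \<longleftrightarrow> adj B y x" for B x y by (auto simp: adj_def)
  have nbrs_z: "adj A' z y \<Longrightarrow> y = r'" for y
    using new_leaf_arcs unfolding adj_def by blast
  have nbrs_r': "adj A' r' y \<Longrightarrow> y = r \<or> y = z" for y
    using no_arc_into_new_root arcs_subset fresh(1) unfolding adj_def by blast
  have "\<not> adj A' r z"
    using new_leaf_arcs(1) arcs_subset fresh(2) fresh_vertices(1) unfolding adj_def by blast
  then have apex_old: "x \<noteq> r' \<and> x \<noteq> z"
    if "u \<noteq> v" "adj A' x u" "adj A' x v" "adj A' u v" for x u v
    using that nbrs_z nbrs_r' adj_sym by metis
  fix a b c assume abc: "a \<noteq> b" "b \<noteq> c" "a \<noteq> c" "adj A' a b" "adj A' b c" "adj A' a c"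
  have "a \<noteq> r' \<and> a \<noteq> z" "b \<noteq> r' \<and> b \<noteq> z" "c \<noteq> r' \<and> c \<noteq> z"
    using apex_old[of b c a] apex_old[of a c b] apex_old[of a b c] abc adj_sym by metis+
  then have "adj A a b" "adj A b c" "adj A a c" using abc(4-6) unfolding adj_def by blast+
  then show False using extendable abc(1-3) unfolding extendable_def triangle_free_def by blast
qed

lemma no_arc_out_of_leaf_ext: "a \<in> insert z X \<Longrightarrow> (a, w) \<notin> A'"
  using new_leaf_arcs(1) leaf_no_arc_out fresh_vertices(3) by blast

lemma path_ext_starts_at_new_root: "dpath A' p x y \<Longrightarrow> r' \<in> set p \<Longrightarrow> x = r'"
  using dpath_arc_into no_arc_into_new_root by metis

lemma path_ext_restrict:
  assumes "dpath A' p x y" "x \<noteq> r'"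
  shows "dpath A p x y"
  unfolding dpath_def
proof (intro conjI allI impI)
  show "p \<noteq> []" "hd p = x" "last p = y" using assms(1) by (auto simp: dpath_def)
  fix i assume i: "Suc i < length p"
  then have "(p ! i, p ! Suc i) \<in> A'" using assms(1) by (auto simp: dpath_def)
  moreover have "p ! i \<noteq> r'"
    using path_ext_starts_at_new_root[OF assms(1)] assms(2) i by (metis Suc_lessD nth_mem)
  ultimately show "(p ! i, p ! Suc i) \<in> A" by auto
qed

lemma path_ext_from_leaf: "dpath A' p x y \<Longrightarrow> x \<in> insert z X \<Longrightarrow> y = x"
  using dpath_arc_out_of dpath_hd_in no_arc_out_of_leaf_ext by metis

lemma path_ext_to_new_leaf:
  assumes "dpath A' p x z" "x \<noteq> z"
  shows "x = r'"
proof -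
  obtain u where "u \<in> set p" "(u, z) \<in> A'"
    using dpath_arc_into[OF assms(1) dpath_last_in[OF assms(1)] assms(2)[symmetric]] by blast
  then show ?thesis using new_leaf_arcs(2) path_ext_starts_at_new_root[OF assms(1)] by blast
qed

lemma path_ext_via_root:
  assumes "dpath A q r w"
  shows "dpath A' (r' # q) r' w"
proof -
  have "q \<noteq> []" "hd q = r" using assms by (auto simp: dpath_def)
  then show ?thesis using dpath_mono[OF _ assms, of A'] by (auto simp: dpath_Cons)
qed

lemma interior_path_ext_via_root: "dpath A q r w \<Longrightarrow> interior (r' # q) \<subseteq> insert r (interior q)"
  by (cases q) (auto simp: dpath_def interior_def)

lemma root_not_interior: "dpath A p x y \<Longrightarrow> r \<notin> interior p"
  using interior_arc_into no_arc_into_root by metis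

lemma path_ext_from_new_root:
  assumes "dpath A' p r' y" "y \<in> V"
  obtains q where "p = r' # q" "dpath A q r y"
proof -
  obtain q where p: "p = r' # q" using assms(1) by (cases p) (auto simp: dpath_def)
  have "y \<noteq> r'" using assms(2) fresh(1) by blast
  then have q: "q \<noteq> []" "(r', hd q) \<in> A'" "dpath A' q (hd q) y"
    using assms(1) p by (auto simp: dpath_Cons split: if_splits)
  have "hd q \<noteq> z" using path_ext_from_leaf[OF q(3)] assms(2) fresh(2) by blast
  moreover have "hd q \<noteq> r'" using q(2) no_arc_into_new_root by blast
  ultimately have "hd q = r" using q(2) arcs_subset fresh(1) by blast
  then have "dpath A q r y" using path_ext_restrict[OF q(3)] fresh_vertices(1) by simp
  then show thesis using that p by blast
qed

lemma root_interior_path_from_new_root: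
  assumes "dpath A' p r' y" "y \<in> V" "y \<noteq> r"
  shows "r \<in> interior p"
proof -
  obtain q where q: "p = r' # q" "dpath A q r y" using path_ext_from_new_root[OF assms(1,2)] .
  then have "q \<noteq> []" "hd q = r" "last q = y" by (auto simp: dpath_def)
  then have "r \<in> set (butlast q)" using assms(3) by (cases q rule: rev_cases) (auto simp: hd_append)
  then show ?thesis using q(1) by simp
qed

lemma reaches_leaves_ext: "reaches_leaves A' r' (insert z X)"
proof -
  have "dpath A' [r', z] r' z" by (simp add: dpath_Cons)
  then show ?thesis
    using extendable path_ext_via_root unfolding reaches_leaves_def extendable_def by blast
qed

lemma splits_leaf_pairs_ext: "splits_leaf_pairs A' r' (insert z X)"
  unfolding splits_leaf_pairs_def
proof (intro ballI impI)
  fix a b assume ab: "a \<in> insert z X" "b \<in> insert z X" "a \<noteq> b"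
  have stay: "dpath A' [r'] r' r'" and to_z: "dpath A' [r', z] r' z" by (simp_all add: dpath_Cons)
  have no_interior: "interior [r'] = {}" "interior [r', z] = {}" by (simp_all add: interior_def)
  have to_leaf: "\<exists>p. dpath A' p r' x" if "x \<in> X" for x
    using reaches_leaves_ext that by (simp add: reaches_leaves_def)
  consider "a = z" "b \<in> X" | "b = z" "a \<in> X" | "a \<in> X" "b \<in> X" using ab by blast
  then show "\<exists>w p q q'. dpath A' p r' w \<and> dpath A' q w a \<and> dpath A' q' w b \<and>
      interior p \<inter> interior q = {} \<and> interior p \<inter> interior q' = {} \<and> interior q \<inter> interior q' = {}"
  proof cases
    case 1
    then obtain q' where "dpath A' q' r' b" using to_leaf by blast
    then show ?thesis using stay to_z no_interior \<open>a = z\<close> by blast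
  next
    case 2
    then obtain q where "dpath A' q r' a" using to_leaf by blast
    then show ?thesis using stay to_z no_interior \<open>b = z\<close> by blast
  next
    case 3
    then obtain w p q q' where p: "dpath A p r w" "dpath A q w a" "dpath A q' w b"
      "interior p \<inter> interior q = {}" "interior p \<inter> interior q' = {}" "interior q \<inter> interior q' = {}"
      using extendable ab(3) unfolding extendable_def splits_leaf_pairs_def by blast
    have "interior (r' # p) \<inter> interior q = {}" "interior (r' # p) \<inter> interior q' = {}"
      using interior_path_ext_via_root[OF p(1)] root_not_interior[OF p(2)] root_not_interior[OF p(3)] p(4,5)
      by blast+
    moreover have "dpath A' q w a" "dpath A' q' w b" using dpath_mono[of A A'] p(2,3) by blast+
    ultimately show ?thesis using path_ext_via_root[OF p(1)] p(6) by blast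
  qed
qed

lemma extendable_ext: "extendable V' A' (insert z X) r'"
proof -
  have "card {v \<in> V'. hybrid A' v} \<le> 1" using hybrids_ext extendable by (simp add: extendable_def)
  then show ?thesis
    unfolding extendable_def
    using binary_network_ext no_arc_into_new_root triangle_free_ext splits_leaf_pairs_ext reaches_leaves_ext
    by blast
qed

lemma old_triplets_ext: "triplets V A \<subseteq> triplets V' A'"
  using triplet_consistent_mono[of V V' A A'] leaves_eq leaves_ext
  unfolding triplets_def by blast

lemma new_triplets_ext: "new_triplets X z \<subseteq> triplets V' A'"
proof
  fix t assume "t \<in> new_triplets X z"
  then obtain a b where ab: "t = ({a, b}, z)" "a \<in> X" "b \<in> X" "a \<noteq> b"
    unfolding new_triplets_def by force
  then obtain w p q q' where p: "dpath A p r w" "dpath A q w a" "dpath A q' w b"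
    "interior p \<inter> interior q = {}" "interior p \<inter> interior q' = {}" "interior q \<inter> interior q' = {}"
    using extendable unfolding extendable_def splits_leaf_pairs_def by blast
  have "w \<in> V" using dpath_set_subset[OF p(1) arcs_subset root_in] dpath_last_in[OF p(1)] by blast
  then have "r' \<noteq> w" using fresh(1) by blast
  have to_z: "dpath A' [r', z] r' z" by (simp add: dpath_Cons)
  have "interior [r', z] = {}" by (simp add: interior_def)
  moreover have "interior (r' # p) \<inter> interior q = {}" "interior (r' # p) \<inter> interior q' = {}"
    using interior_path_ext_via_root[OF p(1)] root_not_interior[OF p(2)] root_not_interior[OF p(3)] p(4,5)
    by blast+
  ultimately have "\<forall>s\<in>{[r', z], r' # p, q, q'}. \<forall>s'\<in>{[r', z], r' # p, q, q'}.
      s \<noteq> s' \<longrightarrow> interior s \<inter> interior s' = {}"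
    using p(6) by blast
  moreover have "dpath A' q w a" "dpath A' q' w b" using dpath_mono[of A A'] p(2,3) by blast+
  ultimately have "triplet_consistent V' A' a b z"
    unfolding triplet_consistent_def using to_z path_ext_via_root[OF p(1)] \<open>w \<in> V\<close> \<open>r' \<noteq> w\<close> by blast
  moreover have "a \<noteq> z" "b \<noteq> z" using ab fresh_vertices(4) by blast+
  ultimately show "t \<in> triplets V' A'"
    unfolding triplets_def leaves_ext using ab by blast
qed

text \<open>Both paths out of r' run through r, so r is the lower vertex w; then r would start three
  internally disjoint paths to distinct leaves.\<close>

lemma new_root_not_triplet_witness:
  assumes paths: "dpath A' p1 r' c" "dpath A' p2 r' w" "dpath A' p3 w a" "dpath A' p4 w b"
    and leaves: "a \<in> X" "b \<in> X" "c \<in> X" "distinct [c, a, b]" and "w \<in> V"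
    and disjoint: "interior p1 \<inter> interior p2 = {}" "interior p1 \<inter> interior p3 = {}"
      "interior p1 \<inter> interior p4 = {}" "interior p3 \<inter> interior p4 = {}"
  shows False
proof -
  have "c \<in> V" "c \<noteq> r" using leaves(3) leaves_subset root_not_leaf by blast+
  then have r_in_p1: "r \<in> interior p1" using root_interior_path_from_new_root[OF paths(1)] by blast
  show False
  proof (cases "w = r")
    case False
    then have "r \<in> interior p2" using root_interior_path_from_new_root[OF paths(2) \<open>w \<in> V\<close>] by blast
    then show False using r_in_p1 disjoint(1) by blast
  next
    case True
    obtain q1 where q1: "p1 = r' # q1" "dpath A q1 r c" using path_ext_from_new_root[OF paths(1) \<open>c \<in> V\<close>] .
    have "dpath A p3 r a" "dpath A p4 r b"
      using path_ext_restrict paths(3,4) True fresh_vertices(1) by blast+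
    moreover have "interior q1 \<inter> interior p3 = {}" "interior q1 \<inter> interior p4 = {}"
      using interior_subset_interior_Cons[of q1 r'] q1(1) disjoint(2,3) by blast+
    moreover have "card {w. (r, w) \<in> A} \<le> 2" using outdeg_root by (simp add: outdeg_def)
    moreover have "r \<notin> {c, a, b}" using leaves root_not_leaf by blast
    moreover have "\<forall>y\<in>{c, a, b}. \<forall>w. (y, w) \<notin> A" using leaves leaf_no_arc_out by blast
    ultimately show False
      using outdeg_two_no_three_disjoint_paths[OF finite_out_arcs _ q1(2)] leaves(4) disjoint(4) by blast
  qed
qed

lemma split_vertex_ext:
  assumes paths: "dpath A' p v w" "dpath A' q w a" "dpath A' q' w b"
    and "v \<noteq> w" "w \<in> V'" "a \<in> insert z X" "b \<in> insert z X" "a \<noteq> b"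
  shows "w \<in> V" "w \<notin> X" "a \<in> X" "b \<in> X"
proof -
  have "w \<noteq> r'"
  proof
    assume "w = r'"
    then have "v = r'" using path_ext_starts_at_new_root[OF paths(1)] dpath_last_in[OF paths(1)] by blast
    then show False using \<open>w = r'\<close> assms(4) by blast
  qed
  moreover have "w \<notin> insert z X"
  proof
    assume "w \<in> insert z X"
    then have "a = w" "b = w" using path_ext_from_leaf paths(2,3) by blast+
    then show False using assms(8) by blast
  qed
  ultimately show "w \<in> V" "w \<notin> X" using assms(5) by blast+
  have "a \<noteq> z" "b \<noteq> z"
    using path_ext_to_new_leaf paths(2,3) \<open>w \<noteq> r'\<close> \<open>w \<notin> insert z X\<close> by blast+
  then show "a \<in> X" "b \<in> X" using assms(6,7) by blast+
qed

lemma triplets_ext_subset: "triplets V' A' \<subseteq> triplets V A \<union> new_triplets X z"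
proof
  fix t assume "t \<in> triplets V' A'"
  then obtain a b c where abc: "t = ({a, b}, c)" "a \<in> insert z X" "b \<in> insert z X" "c \<in> insert z X"
    "a \<noteq> b" "a \<noteq> c" "b \<noteq> c" "triplet_consistent V' A' a b c"
    unfolding triplets_def leaves_ext by blast
  then obtain v w p1 p2 p3 p4 where w: "v \<in> V'" "w \<in> V'" "v \<noteq> w"
    and paths: "dpath A' p1 v c" "dpath A' p2 v w" "dpath A' p3 w a" "dpath A' p4 w b"
    and disjoint: "\<forall>p\<in>{p1, p2, p3, p4}. \<forall>q\<in>{p1, p2, p3, p4}. p \<noteq> q \<longrightarrow> interior p \<inter> interior q = {}"
    unfolding triplet_consistent_def by blast
  have "w \<in> V" "w \<notin> X" and ab: "a \<in> X" "b \<in> X"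
    using split_vertex_ext[OF paths(2-4) w(3,2) abc(2,3,5)] by blast+
  show "t \<in> triplets V A \<union> new_triplets X z"
  proof (cases "c = z")
    case True
    then show ?thesis using abc(1,5) ab unfolding new_triplets_def by force
  next
    case False
    then have "c \<in> X" using abc(4) by blast
    have "last p1 = c" "last p2 = w" "last p3 = a" "last p4 = b" using paths by (simp_all add: dpath_last)
    moreover have "c \<noteq> w" using \<open>c \<in> X\<close> \<open>w \<notin> X\<close> by blast
    ultimately have "p1 \<noteq> p2" "p1 \<noteq> p3" "p1 \<noteq> p4" "p3 \<noteq> p4" using abc(5-7) by metis+
    then have "interior p1 \<inter> interior p2 = {}" "interior p1 \<inter> interior p3 = {}"
      "interior p1 \<inter> interior p4 = {}" "interior p3 \<inter> interior p4 = {}"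
      using disjoint by blast+
    moreover have "distinct [c, a, b]" using abc(5-7) by auto
    ultimately have "v \<noteq> r'"
      using new_root_not_triplet_witness[OF _ _ paths(3,4) ab \<open>c \<in> X\<close>] paths(1,2) \<open>w \<in> V\<close> by blast
    moreover have "v \<noteq> z" using path_ext_from_leaf[OF paths(2)] \<open>w \<in> V\<close> fresh(2) by blast
    moreover have "w \<noteq> r'" using \<open>w \<in> V\<close> fresh(1) by blast
    ultimately have "v \<in> V" "dpath A p1 v c" "dpath A p2 v w" "dpath A p3 w a" "dpath A p4 w b"
      using w(1) paths path_ext_restrict by blast+
    then have "triplet_consistent V A a b c"
      unfolding triplet_consistent_def using \<open>w \<in> V\<close> w(3) disjoint by blast
    then show ?thesis using abc(1,5-7) ab \<open>c \<in> X\<close> leaves_eq unfolding triplets_def by blast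
  qed
qed

lemma finite_triplets: "finite (triplets V A)"
proof -
  have "triplets V A \<subseteq> (\<lambda>(a, b, c). ({a, b}, c)) ` (X \<times> X \<times> X)"
    unfolding triplets_def leaves_eq by force
  moreover have "finite X" using leaves_subset finite_V by (rule finite_subset)
  ultimately show ?thesis by (meson finite_SigmaI finite_imageI finite_subset)
qed

lemma card_triplets_ext: "card (triplets V' A') = card (triplets V A) + card (new_triplets X z)"
proof -
  have "triplets V' A' = triplets V A \<union> new_triplets X z"
    using triplets_ext_subset old_triplets_ext new_triplets_ext by blast
  moreover have "triplets V A \<inter> new_triplets X z = {}"
    using leaves_eq fresh_vertices(4) unfolding triplets_def new_triplets_def by blast
  moreover have "finite (new_triplets X z)"
  proof -
    have "new_triplets X z \<subseteq> (\<lambda>(a, b). ({a, b}, z)) ` (X \<times> X)" unfolding new_triplets_def by force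
    moreover have "finite X" using leaves_subset finite_V by (rule finite_subset)
    ultimately show ?thesis by (meson finite_SigmaI finite_imageI finite_subset)
  qed
  ultimately show ?thesis using finite_triplets by (simp add: card_Un_disjoint)
qed

end

section \<open>Reversing arcs\<close>

definition reverse_arcs :: "('v \<times> 'v) set \<Rightarrow> 'v \<times> 'v \<Rightarrow> 'v \<times> 'v" where
  "reverse_arcs F e = (if e \<in> F then prod.swap e else e)"

lemma adj_reverse_arcs: "adj (reverse_arcs F ` A) = adj A"
  by (force simp: fun_eq_iff adj_def reverse_arcs_def image_iff)

lemma uconnected_reverse_arcs: "uconnected (reverse_arcs F ` A) = uconnected A"
  by (simp add: fun_eq_iff uconnected_def uedges_def adj_reverse_arcs)

lemma bicomp_reverse_arcs: "bicomp V (reverse_arcs F ` A) = bicomp V A"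
  by (simp add: fun_eq_iff bicomp_def biconnected_def uconnected_reverse_arcs)

lemma edges_in_reverse_arcs: "edges_in (reverse_arcs F ` A) S = reverse_arcs F ` edges_in A S"
  by (force simp: edges_in_def reverse_arcs_def)

lemma galls_reverse_arcs:
  assumes "inj_on (reverse_arcs F) A"
  shows "galls V (reverse_arcs F ` A) = galls V A"
proof -
  have "card (edges_in (reverse_arcs F ` A) S) = card (edges_in A S)" for S
    unfolding edges_in_reverse_arcs
    by (rule card_image, rule inj_on_subset[OF assms]) (auto simp: edges_in_def)
  then show ?thesis unfolding galls_def bicomp_reverse_arcs by simp
qed

lemma cut_arc_reverse_arcs:
  assumes "inj_on (reverse_arcs F) A" "e \<in> A"
  shows "cut_arc V (reverse_arcs F ` A) (reverse_arcs F e) \<longleftrightarrow> cut_arc V A e"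
proof -
  have "reverse_arcs F ` A - {reverse_arcs F e} = reverse_arcs F ` (A - {e})"
    using assms by (simp add: inj_on_image_set_diff)
  then show ?thesis unfolding cut_arc_def using assms(2) by (simp add: uconnected_reverse_arcs)
qed

lemma card_nontrivial_cut_arcs_reverse_arcs:
  assumes inj: "inj_on (reverse_arcs F) A"
    and leaves: "leaves V (reverse_arcs F ` A) = leaves V A"
    and away: "\<forall>e\<in>A \<inter> F. fst e \<notin> leaves V A \<and> snd e \<notin> leaves V A"
  shows "card (nontrivial_cut_arcs V (reverse_arcs F ` A)) = card (nontrivial_cut_arcs V A)"
proof -
  have head: "snd (reverse_arcs F e) \<notin> leaves V A \<longleftrightarrow> snd e \<notin> leaves V A" if "e \<in> A" for e
    using away that by (auto simp: reverse_arcs_def)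
  have "nontrivial_cut_arcs V (reverse_arcs F ` A) = reverse_arcs F ` nontrivial_cut_arcs V A"
  proof (intro equalityI subsetI)
    fix e' assume e': "e' \<in> nontrivial_cut_arcs V (reverse_arcs F ` A)"
    then obtain e where "e \<in> A" "e' = reverse_arcs F e"
      by (auto simp: nontrivial_cut_arcs_def cut_arc_def)
    then show "e' \<in> reverse_arcs F ` nontrivial_cut_arcs V A"
      using e' cut_arc_reverse_arcs[OF inj] head by (auto simp: nontrivial_cut_arcs_def leaves)
  next
    fix e' assume "e' \<in> reverse_arcs F ` nontrivial_cut_arcs V A"
    then obtain e where "e \<in> nontrivial_cut_arcs V A" "e' = reverse_arcs F e" by blast
    moreover then have "e \<in> A" by (simp add: nontrivial_cut_arcs_def cut_arc_def)
    ultimately show "e' \<in> nontrivial_cut_arcs V (reverse_arcs F ` A)"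
      using cut_arc_reverse_arcs[OF inj] head by (auto simp: nontrivial_cut_arcs_def leaves)
  qed
  moreover have "inj_on (reverse_arcs F) (nontrivial_cut_arcs V A)"
    using inj by (rule inj_on_subset) (auto simp: nontrivial_cut_arcs_def cut_arc_def)
  ultimately show ?thesis by (simp add: card_image)
qed

lemma inj_on_reverse_arcs:
  assumes "\<forall>e\<in>B \<inter> F. prod.swap e \<notin> B"
  shows "inj_on (reverse_arcs F) B"
proof (rule inj_onI)
  fix e e' assume "e \<in> B" "e' \<in> B" "reverse_arcs F e = reverse_arcs F e'"
  then show "e = e'"
    using assms swap_swap[of e] swap_swap[of e'] unfolding reverse_arcs_def
    by (auto split: if_splits) (metis swap_swap)
qed

section \<open>Deciding properties of explicit networks\<close>

fun paths_from :: "nat \<Rightarrow> ('v \<times> 'v) list \<Rightarrow> 'v \<Rightarrow> 'v list list" where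
  "paths_from 0 As x = [[x]]"
| "paths_from (Suc k) As x =
     [x] # concat (map (\<lambda>y. map ((#) x) (paths_from k As y)) (map snd (filter (\<lambda>e. fst e = x) As)))"

lemma dpath_paths_from: "p \<in> set (paths_from k As x) \<Longrightarrow> dpath (set As) p x (last p)"
proof (induction k arbitrary: x p)
  case (Suc k)
  show ?case
  proof (cases "p = [x]")
    case False
    then obtain y q where q: "(x, y) \<in> set As" "q \<in> set (paths_from k As y)" "p = x # q"
      using Suc.prems by auto
    have q': "dpath (set As) q y (last q)" using Suc.IH q(2) .
    then have "q \<noteq> []" "hd q = y" by (auto simp: dpath_def)
    then show ?thesis using q q' by (simp add: dpath_Cons)
  qed simp
qed simp

lemma paths_from_complete:
  "dpath (set As) p x y \<Longrightarrow> length p \<le> Suc k \<Longrightarrow> p \<in> set (paths_from k As x)"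
proof (induction k arbitrary: x p)
  case 0
  then show ?case by (cases p) (auto simp: dpath_def)
next
  case (Suc k)
  obtain q where p: "p = x # q" using Suc.prems by (cases p) (auto simp: dpath_def)
  show ?case
  proof (cases "q = []")
    case False
    then have "(x, hd q) \<in> set As" "dpath (set As) q (hd q) y"
      using Suc.prems p by (auto simp: dpath_Cons)
    moreover have "length q \<le> Suc k" using Suc.prems p by simp
    ultimately have "q \<in> set (paths_from k As (hd q))" "hd q \<in> set (map snd (filter (\<lambda>e. fst e = x) As))"
      using Suc.IH by (force simp: image_iff)+
    then show ?thesis using p by auto
  qed (simp add: p)
qed

lemma dpath_iff_paths_from:
  assumes "is_dag V (set As)" "card V \<le> Suc k" "x \<in> V"
  shows "dpath (set As) p x y \<longleftrightarrow> p \<in> set (paths_from k As x) \<and> last p = y"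
proof
  assume p: "dpath (set As) p x y"
  have "length p \<le> Suc k" using dpath_length[OF p _ assms(3)] assms(1,2) by (auto simp: is_dag_def)
  then show "p \<in> set (paths_from k As x) \<and> last p = y"
    using paths_from_complete[OF p] dpath_last[OF p] by simp
qed (metis dpath_paths_from)

text \<open>Only tails of arcs can be the vertices v and w of a witness, so they are searched in a list Ss
  of candidates; this keeps the evaluation by code_simp small.\<close>

definition triplet_consistent_upto ::
  "nat \<Rightarrow> ('v \<times> 'v) list \<Rightarrow> 'v list \<Rightarrow> 'v \<Rightarrow> 'v \<Rightarrow> 'v \<Rightarrow> bool" where
  "triplet_consistent_upto k As Ss a b c \<longleftrightarrow>
     (\<exists>v\<in>set Ss. \<exists>w\<in>set Ss. v \<noteq> w \<and>
        (\<exists>p1\<in>set (paths_from k As v). last p1 = c \<and>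
        (\<exists>p2\<in>set (paths_from k As v). last p2 = w \<and>
        (\<exists>p3\<in>set (paths_from k As w). last p3 = a \<and>
        (\<exists>p4\<in>set (paths_from k As w). last p4 = b \<and>
           (\<forall>p\<in>{p1, p2, p3, p4}. \<forall>q\<in>{p1, p2, p3, p4}. p \<noteq> q \<longrightarrow> interior p \<inter> interior q = {}))))))"

lemma triplet_consistent_iff_upto:
  assumes "is_dag V (set As)" "card V \<le> Suc k" "fst ` set As \<subseteq> set Ss" "set Ss \<subseteq> V" "a \<noteq> b"
  shows "triplet_consistent V (set As) a b c \<longleftrightarrow> triplet_consistent_upto k As Ss a b c"
proof -
  note path_iff = dpath_iff_paths_from[OF assms(1,2)]
  have source: "x \<in> set Ss" if "dpath (set As) p x y" "x \<noteq> y" for p x y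
    using dpath_arc_out_of[OF that(1) dpath_hd_in[OF that(1)] that(2)] assms(3) by force
  show ?thesis
  proof
    assume "triplet_consistent V (set As) a b c"
    then obtain v w p1 p2 p3 p4 where "v \<in> V" "w \<in> V" "v \<noteq> w"
      "dpath (set As) p1 v c" "dpath (set As) p2 v w" "dpath (set As) p3 w a" "dpath (set As) p4 w b"
      "\<forall>p\<in>{p1, p2, p3, p4}. \<forall>q\<in>{p1, p2, p3, p4}. p \<noteq> q \<longrightarrow> interior p \<inter> interior q = {}"
      unfolding triplet_consistent_def by blast
    note t = this
    have "v \<in> set Ss" using source[OF t(5) t(3)] .
    moreover have "w \<in> set Ss" using source[OF t(6)] source[OF t(7)] assms(5) by blast
    moreover have "p1 \<in> set (paths_from k As v)" "p2 \<in> set (paths_from k As v)"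
      "p3 \<in> set (paths_from k As w)" "p4 \<in> set (paths_from k As w)"
      "last p1 = c" "last p2 = w" "last p3 = a" "last p4 = b"
      using t(4-7) path_iff[OF t(1)] path_iff[OF t(2)] by blast+
    ultimately show "triplet_consistent_upto k As Ss a b c"
      unfolding triplet_consistent_upto_def using t(3,8) by blast
  next
    assume "triplet_consistent_upto k As Ss a b c"
    then obtain v w p1 p2 p3 p4 where "v \<in> set Ss" "w \<in> set Ss" "v \<noteq> w"
      "p1 \<in> set (paths_from k As v)" "last p1 = c" "p2 \<in> set (paths_from k As v)" "last p2 = w"
      "p3 \<in> set (paths_from k As w)" "last p3 = a" "p4 \<in> set (paths_from k As w)" "last p4 = b"
      "\<forall>p\<in>{p1, p2, p3, p4}. \<forall>q\<in>{p1, p2, p3, p4}. p \<noteq> q \<longrightarrow> interior p \<inter> interior q = {}"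
      unfolding triplet_consistent_upto_def by blast
    note t = this
    have "v \<in> V" "w \<in> V" using t(1,2) assms(4) by auto
    moreover have "dpath (set As) p1 v c" "dpath (set As) p2 v w"
      "dpath (set As) p3 w a" "dpath (set As) p4 w b"
      using t(4-11) dpath_paths_from by fastforce+
    ultimately show "triplet_consistent V (set As) a b c"
      unfolding triplet_consistent_def using t(3,12) by blast
  qed
qed

lemma triplet_consistent_swap: "triplet_consistent V A a b c \<Longrightarrow> triplet_consistent V A b a c"
proof -
  have "{p1, p2, p4, p3} = {p1, p2, p3, p4}" for p1 p2 p3 p4 :: "'a list" by auto
  then show "triplet_consistent V A a b c \<Longrightarrow> triplet_consistent V A b a c"
    unfolding triplet_consistent_def by metis
qed

lemma card_triplets_ordered:
  fixes V :: "'v::linorder set"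
  shows "card (triplets V A) = card (Set.filter (\<lambda>(a, b, c). a < b \<and> a \<noteq> c \<and> b \<noteq> c \<and> triplet_consistent V A a b c)
    (leaves V A \<times> leaves V A \<times> leaves V A))" (is "_ = card ?S")
proof -
  have "triplets V A = (\<lambda>(a, b, c). ({a, b}, c)) ` ?S"
  proof (intro equalityI subsetI)
    fix t assume "t \<in> triplets V A"
    then obtain a b c where abc: "t = ({a, b}, c)" "a \<in> leaves V A" "b \<in> leaves V A" "c \<in> leaves V A"
      "a \<noteq> b" "a \<noteq> c" "b \<noteq> c" "triplet_consistent V A a b c" unfolding triplets_def by blast
    show "t \<in> (\<lambda>(a, b, c). ({a, b}, c)) ` ?S"
    proof (cases "a < b")
      case True
      then show ?thesis using abc by (auto intro!: image_eqI[where x = "(a, b, c)"])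
    next
      case False
      then have "b < a" using abc(5) by simp
      then show ?thesis
        using abc triplet_consistent_swap[OF abc(8)] by (auto intro!: image_eqI[where x = "(b, a, c)"])
    qed
  qed (auto simp: triplets_def)
  moreover have "inj_on (\<lambda>(a, b, c). ({a, b}, c)) ?S"
    by (auto simp: inj_on_def doubleton_eq_iff)
  ultimately show ?thesis by (simp add: card_image)
qed

lemma card_triplets_by_computation:
  fixes Vs :: "'v::linorder list"
  assumes "is_dag (set Vs) (set As)" "leaves (set Vs) (set As) = set Xs" "length Vs \<le> Suc k"
    "fst ` set As \<subseteq> set Ss" "set Ss \<subseteq> set Vs"
  shows "card (triplets (set Vs) (set As)) = card (Set.filter
    (\<lambda>(a, b, c). a < b \<and> a \<noteq> c \<and> b \<noteq> c \<and> triplet_consistent_upto k As Ss a b c) (set Xs \<times> set Xs \<times> set Xs))"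
proof -
  have "card (set Vs) \<le> Suc k" using card_length[of Vs] assms(3) by linarith
  then have "a < b \<Longrightarrow> triplet_consistent (set Vs) (set As) a b c \<longleftrightarrow> triplet_consistent_upto k As Ss a b c"
    for a b c using triplet_consistent_iff_upto[OF assms(1) _ assms(4,5)] by simp
  then have "(\<lambda>(a, b, c). a < b \<and> a \<noteq> c \<and> b \<noteq> c \<and> triplet_consistent (set Vs) (set As) a b c) =
      (\<lambda>(a, b, c). a < b \<and> a \<noteq> c \<and> b \<noteq> c \<and> triplet_consistent_upto k As Ss a b c)"
    by (intro ext) (auto split: prod.split)
  then show ?thesis unfolding card_triplets_ordered assms(2) by simp
qed

lemma rank_acyclic:
  assumes "\<forall>(u, v)\<in>A. rk u < (rk v :: nat)"
  shows "(v, v) \<notin> A\<^sup>+"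
proof -
  have "(x, y) \<in> A\<^sup>+ \<Longrightarrow> rk x < rk y" for x y
    by (induction rule: trancl_induct) (use assms in fastforce)+
  then show ?thesis by blast
qed

lemma indeg_set: "indeg (set As) v = card (set (map fst (filter (\<lambda>e. snd e = v) As)))"
  unfolding indeg_def by (rule arg_cong[where f = card]) force

lemma outdeg_set: "outdeg (set As) v = card (set (map snd (filter (\<lambda>e. fst e = v) As)))"
  unfolding outdeg_def by (rule arg_cong[where f = card]) force

definition neighbours :: "('v \<times> 'v) list \<Rightarrow> 'v \<Rightarrow> 'v list" where
  "neighbours As a = map snd (filter (\<lambda>e. fst e = a) As) @ map fst (filter (\<lambda>e. snd e = a) As)"

lemma set_neighbours: "set (neighbours As a) = {b. adj (set As) a b}"
  by (force simp: neighbours_def adj_def)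

definition splits_upto :: "nat \<Rightarrow> ('v \<times> 'v) list \<Rightarrow> 'v \<Rightarrow> 'v \<Rightarrow> 'v \<Rightarrow> bool" where
  "splits_upto k As r a b \<longleftrightarrow>
     (\<exists>p\<in>set (paths_from k As r). \<exists>q\<in>set (paths_from k As (last p)). last q = a \<and>
       (\<exists>q'\<in>set (paths_from k As (last p)). last q' = b \<and>
          interior p \<inter> interior q = {} \<and> interior p \<inter> interior q' = {} \<and> interior q \<inter> interior q' = {}))"

lemma triangle_free_by_neighbours:
  assumes "set As \<subseteq> set Vs \<times> set Vs"
    and "\<forall>a\<in>set Vs. \<forall>b\<in>set (neighbours As a). \<forall>c\<in>set (neighbours As a).
      b = c \<or> ((b, c) \<notin> set As \<and> (c, b) \<notin> set As)"
  shows "triangle_free (set As)"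
  unfolding triangle_free_def
proof (intro notI, elim exE conjE)
  fix a b c assume abc: "b \<noteq> c" "adj (set As) a b" "adj (set As) b c" "adj (set As) a c"
  have "a \<in> set Vs" using assms(1) abc(2) by (auto simp: adj_def)
  then show False using assms(2) abc unfolding set_neighbours by (auto simp: adj_def)
qed

lemma reaches_leaves_upto:
  "\<forall>a\<in>X. \<exists>p\<in>set (paths_from k As r). last p = a \<Longrightarrow> reaches_leaves (set As) r X"
  unfolding reaches_leaves_def using dpath_paths_from by fastforce

lemma splits_leaf_pairs_upto:
  assumes "\<forall>a\<in>X. \<forall>b\<in>X. a \<noteq> b \<longrightarrow> splits_upto k As r a b"
  shows "splits_leaf_pairs (set As) r X"
  unfolding splits_leaf_pairs_def
proof (intro ballI impI)
  fix a b assume "a \<in> X" "b \<in> X" "a \<noteq> b"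
  then obtain p q q' where "p \<in> set (paths_from k As r)" "q \<in> set (paths_from k As (last p))" "last q = a"
    "q' \<in> set (paths_from k As (last p))" "last q' = b"
    "interior p \<inter> interior q = {}" "interior p \<inter> interior q' = {}" "interior q \<inter> interior q' = {}"
    using assms unfolding splits_upto_def by blast
  then show "\<exists>w p q q'. dpath (set As) p r w \<and> dpath (set As) q w a \<and> dpath (set As) q' w b \<and>
      interior p \<inter> interior q = {} \<and> interior p \<inter> interior q' = {} \<and> interior q \<inter> interior q' = {}"
    using dpath_paths_from by metis
qed

lemma extendable_by_computation:
  fixes As :: "('v \<times> 'v) list" and rk :: "'v \<Rightarrow> nat"
  assumes arcs: "set As \<subseteq> set Vs \<times> set Vs" and rank: "\<forall>(u, v)\<in>set As. rk u < rk v"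
    and root: "r \<in> set Vs" "\<forall>v\<in>set Vs. indeg (set As) v = 0 \<longleftrightarrow> v = r"
    and degrees: "\<forall>v\<in>set Vs. (indeg (set As) v = 0 \<and> outdeg (set As) v = 2) \<or>
      (indeg (set As) v = 1 \<and> outdeg (set As) v = 0) \<or> (indeg (set As) v = 1 \<and> outdeg (set As) v = 2) \<or>
      (indeg (set As) v = 2 \<and> outdeg (set As) v = 1)"
    and leaves: "Set.filter (\<lambda>v. indeg (set As) v = 1 \<and> outdeg (set As) v = 0) (set Vs) = set Xs"
    and hybrids: "card {v \<in> set Vs. hybrid (set As) v} \<le> 1"
    and triangles: "\<forall>a\<in>set Vs. \<forall>b\<in>set (neighbours As a). \<forall>c\<in>set (neighbours As a).
      b = c \<or> ((b, c) \<notin> set As \<and> (c, b) \<notin> set As)"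
    and reaches: "\<forall>a\<in>set Xs. \<exists>p\<in>set (paths_from k As r). last p = a"
    and splits: "\<forall>a\<in>set Xs. \<forall>b\<in>set Xs. a \<noteq> b \<longrightarrow> splits_upto k As r a b"
  shows "extendable (set Vs) (set As) (set Xs) r"
proof -
  have "binary_network (set Vs) (set As) (set Xs)"
    unfolding binary_network_def is_dag_def leaves_def
    using arcs rank_acyclic[OF rank] root degrees leaves by auto
  moreover have "(u, r) \<notin> set As" for u
  proof
    assume "(u, r) \<in> set As"
    then have "u \<in> set (map fst (filter (\<lambda>e. snd e = r) As))" by force
    then have "indeg (set As) r \<noteq> 0" unfolding indeg_set by (metis List.finite_set card_0_eq empty_iff)
    then show False using root by simp
  qed
  ultimately show ?thesis
    unfolding extendable_def
    using root(1) hybrids triangle_free_by_neighbours[OF arcs triangles]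
      reaches_leaves_upto[OF reaches] splits_leaf_pairs_upto[OF splits] by blast
qed

section \<open>Two families of networks\<close>

definition As1 :: "(nat \<times> nat) list" where
  "As1 = [(0,1), (2,1), (3,2), (4,3), (0,4), (1,5), (2,6), (3,7), (4,8), (8,9), (8,10)]"

definition As2 :: "(nat \<times> nat) list" where
  "As2 = [(0,1), (1,2), (2,3), (3,4), (0,4), (1,5), (2,6), (3,7), (4,8), (8,9), (8,10)]"

definition rank_As1 :: "nat \<Rightarrow> nat" where
  "rank_As1 v = (if v = 1 then 4 else if v = 2 then 3 else if v = 3 then 2 else if v = 4 then 1 else v)"

lemma extendable_As1: "extendable (set [0..<11]) (set As1) (set [5, 6, 7, 9, 10]) 0"
  by (rule extendable_by_computation[where rk = rank_As1 and k = 10];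
      (unfold As1_def rank_As1_def indeg_set outdeg_set hybrid_def neighbours_def splits_upto_def interior_def)?;
      code_simp)

lemma extendable_As2: "extendable (set [0..<11]) (set As2) (set [5, 6, 7, 9, 10]) 0"
  by (rule extendable_by_computation[where rk = id and k = 10];
      (unfold As2_def indeg_set outdeg_set hybrid_def neighbours_def splits_upto_def interior_def)?;
      code_simp)

lemma card_triplets_As1: "card (triplets (set [0..<11]) (set As1)) = 15"
proof -
  have "card (triplets (set [0..<11]) (set As1)) = card (Set.filter
    (\<lambda>(a, b, c). a < b \<and> a \<noteq> c \<and> b \<noteq> c \<and> triplet_consistent_upto 10 As1 [0, 1, 2, 3, 4, 8] a b c)
    (set [5, 6, 7, 9, 10] \<times> set [5, 6, 7, 9, 10] \<times> set [5, 6, 7, 9, 10]))"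
    using extendable_As1
    by (intro card_triplets_by_computation) (auto simp: extendable_def binary_network_def As1_def)
  also have "\<dots> = 15"
    unfolding As1_def triplet_consistent_upto_def interior_def by code_simp
  finally show ?thesis .
qed

lemma card_triplets_As2: "card (triplets (set [0..<11]) (set As2)) = 16"
proof -
  have "card (triplets (set [0..<11]) (set As2)) = card (Set.filter
    (\<lambda>(a, b, c). a < b \<and> a \<noteq> c \<and> b \<noteq> c \<and> triplet_consistent_upto 10 As2 [0, 1, 2, 3, 4, 8] a b c)
    (set [5, 6, 7, 9, 10] \<times> set [5, 6, 7, 9, 10] \<times> set [5, 6, 7, 9, 10]))"
    using extendable_As2
    by (intro card_triplets_by_computation) (auto simp: extendable_def binary_network_def As2_def)
  also have "\<dots> = 16"
    unfolding As2_def triplet_consistent_upto_def interior_def by code_simp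
  finally show ?thesis .
qed

primrec grown_root :: "nat \<Rightarrow> nat" where
  "grown_root 0 = 0"
| "grown_root (Suc k) = 11 + 2 * k"

primrec grown_leaves :: "nat \<Rightarrow> nat set" where
  "grown_leaves 0 = set [5, 6, 7, 9, 10]"
| "grown_leaves (Suc k) = insert (12 + 2 * k) (grown_leaves k)"

primrec grown_arcs :: "(nat \<times> nat) list \<Rightarrow> nat \<Rightarrow> (nat \<times> nat) set" where
  "grown_arcs As 0 = set As"
| "grown_arcs As (Suc k) = insert (11 + 2 * k, grown_root k) (insert (11 + 2 * k, 12 + 2 * k) (grown_arcs As k))"

definition grown_vertices :: "nat \<Rightarrow> nat set" where
  "grown_vertices k = {0..<11 + 2 * k}"

lemma grown_vertices_Suc:
  "grown_vertices (Suc k) = insert (11 + 2 * k) (insert (12 + 2 * k) (grown_vertices k))"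
  by (auto simp: grown_vertices_def)

lemma root_extension_grown:
  assumes "extendable (grown_vertices k) (grown_arcs As k) (grown_leaves k) (grown_root k)"
  shows "root_extension (grown_vertices k) (grown_arcs As k) (grown_leaves k) (grown_root k) (11 + 2 * k) (12 + 2 * k)"
  using assms by unfold_locales (auto simp: grown_vertices_def)

lemma extendable_grown:
  assumes "extendable (set [0..<11]) (set As) (set [5, 6, 7, 9, 10]) 0"
  shows "extendable (grown_vertices k) (grown_arcs As k) (grown_leaves k) (grown_root k)"
proof (induction k)
  case 0
  then show ?case using assms by (simp add: grown_vertices_def atLeast0LessThan)
next
  case (Suc k)
  then show ?case
    using root_extension.extendable_ext[OF root_extension_grown[OF Suc]] by (simp add: grown_vertices_Suc)
qed

lemma card_triplets_grown_Suc:
  assumes "extendable (set [0..<11]) (set As) (set [5, 6, 7, 9, 10]) 0"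
  shows "card (triplets (grown_vertices (Suc k)) (grown_arcs As (Suc k))) =
    card (triplets (grown_vertices k) (grown_arcs As k)) + card (new_triplets (grown_leaves k) (12 + 2 * k))"
  using root_extension.card_triplets_ext[OF root_extension_grown[OF extendable_grown[OF assms]]]
  by (simp add: grown_vertices_Suc)

lemma card_triplets_grown:
  "card (triplets (grown_vertices k) (grown_arcs As2 k)) = card (triplets (grown_vertices k) (grown_arcs As1 k)) + 1"
proof (induction k)
  case 0
  then show ?case using card_triplets_As1 card_triplets_As2 by (simp add: grown_vertices_def atLeast0LessThan)
next
  case (Suc k)
  then show ?case using card_triplets_grown_Suc[OF extendable_As1] card_triplets_grown_Suc[OF extendable_As2] by simp
qed

lemma grown_leaves_subset: "grown_leaves k \<subseteq> {5, 6, 7, 9, 10} \<union> {12..}"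
  by (induction k) auto

lemma card_grown_leaves: "card (grown_leaves k) = 5 + k"
proof (induction k)
  case (Suc k)
  have "grown_leaves k \<subseteq> grown_vertices k"
    using extendable_grown[OF extendable_As1, of k] unfolding extendable_def binary_network_def leaves_def by blast
  then have "12 + 2 * k \<notin> grown_leaves k" "finite (grown_leaves k)"
    by (auto simp: grown_vertices_def intro: finite_subset)
  then show ?case using Suc by simp
qed simp

lemma grown_arcs_subset: "grown_arcs As k \<subseteq> set As \<union> {e. 11 \<le> fst e}"
  by (induction k) auto

definition reversed_path :: "(nat \<times> nat) set" where
  "reversed_path = {(2, 1), (3, 2), (4, 3)}"

lemma grown_arcs_reverse: "grown_arcs As2 k = reverse_arcs reversed_path ` grown_arcs As1 k"
proof (induction k)
  case 0
  show ?case unfolding reversed_path_def reverse_arcs_def As1_def As2_def by code_simp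
next
  case (Suc k)
  then show ?case by (simp add: reverse_arcs_def reversed_path_def)
qed

lemma inj_on_reverse_grown_arcs: "inj_on (reverse_arcs reversed_path) (grown_arcs As1 k)"
  using grown_arcs_subset[of As1 k]
  by (intro inj_on_reverse_arcs) (auto simp: reversed_path_def As1_def)

lemma leaves_grown:
  assumes "extendable (set [0..<11]) (set As) (set [5, 6, 7, 9, 10]) 0"
  shows "leaves (grown_vertices k) (grown_arcs As k) = grown_leaves k"
  using extendable_grown[OF assms] by (simp add: extendable_def binary_network_def)

lemma card_galls_grown:
  "card (galls (grown_vertices k) (grown_arcs As2 k)) = card (galls (grown_vertices k) (grown_arcs As1 k))"
  unfolding grown_arcs_reverse galls_reverse_arcs[OF inj_on_reverse_grown_arcs] ..

lemma card_nontrivial_cut_arcs_grown: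
  "card (nontrivial_cut_arcs (grown_vertices k) (grown_arcs As2 k)) =
    card (nontrivial_cut_arcs (grown_vertices k) (grown_arcs As1 k))"
proof -
  have leaves: "leaves (grown_vertices k) (reverse_arcs reversed_path ` grown_arcs As1 k) =
      leaves (grown_vertices k) (grown_arcs As1 k)"
    unfolding grown_arcs_reverse[symmetric] leaves_grown[OF extendable_As1] leaves_grown[OF extendable_As2] ..
  have "\<forall>e\<in>grown_arcs As1 k \<inter> reversed_path.
      fst e \<notin> leaves (grown_vertices k) (grown_arcs As1 k) \<and> snd e \<notin> leaves (grown_vertices k) (grown_arcs As1 k)"
    using grown_leaves_subset[of k] unfolding leaves_grown[OF extendable_As1] reversed_path_def by auto
  then show ?thesis
    unfolding grown_arcs_reverse by (rule card_nontrivial_cut_arcs_reverse_arcs[OF inj_on_reverse_grown_arcs leaves])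
qed

theorem mainTheorem5:
  fixes n :: nat
  assumes "n \<ge> 6"
  shows "\<exists>(X :: nat set) V1 A1 V2 A2.
           card X = n \<and>
           binary_level1 V1 A1 X \<and> binary_level1 V2 A2 X \<and>
           (V1, A1) \<noteq> (V2, A2) \<and>
           card (galls V1 A1) = card (galls V2 A2) \<and>
           card (nontrivial_cut_arcs V1 A1) = card (nontrivial_cut_arcs V2 A2) \<and>
           card (triplets V1 A1) \<noteq> card (triplets V2 A2)"
proof -
  define k where "k = n - 5"
  let ?V = "grown_vertices k" and ?X = "grown_leaves k" and ?A1 = "grown_arcs As1 k" and ?A2 = "grown_arcs As2 k"
  have "binary_level1 ?V ?A1 ?X" "binary_level1 ?V ?A2 ?X"
    using extendable_binary_level1[OF extendable_grown] extendable_As1 extendable_As2 by blast+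
  moreover have "card ?X = n" using card_grown_leaves[of k] assms unfolding k_def by simp
  moreover have "card (triplets ?V ?A1) \<noteq> card (triplets ?V ?A2)" using card_triplets_grown[of k] by simp
  moreover from this have "(?V, ?A1) \<noteq> (?V, ?A2)" by auto
  ultimately show ?thesis
    using card_galls_grown[of k] card_nontrivial_cut_arcs_grown[of k]
    by (intro exI[of _ ?X] exI[of _ ?V] exI[of _ ?A1] exI[of _ ?V] exI[of _ ?A2]) simp
qed

end
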